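(* There is a universal constant $C>0$ such that for every finite set $\mathcal{W}$ and every probability vector $\mathbf{P}=(P_w)_{w\in\mathcal{W}}$, $$\mathbb{E}_{Y\sim U(0,1)}\big(f_{1,\mathbf{P}}(Y)-1\big)^2\le C\,|\mathcal{W}|\,(1-\max_wP_w),$$ where $f_{1,\mathbf{P}}(r)=\sum_{w:P_w>0}r^{1/P_w-1}$.
   Context: $f_{1,\mathbf{P}}$ is the density on $[0,1]$ of the distribution with CDF $F_{1,\mathbf{P}}(r)=\sum_wP_wr^{1/P_w}$. *)

theory Defs
  imports "HOL-Analysis.Analysis"
begin

definition f1 :: "'a set \<Rightarrow> ('a \<Rightarrow> real) \<Rightarrow> real \<Rightarrow> real" where
  "f1 W P r = (\<Sum>w\<in>{w\<in>W. P w > 0}. r powr (1 / P w - 1))"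

definition prob_vector :: "'a set \<Rightarrow> ('a \<Rightarrow> real) \<Rightarrow> bool" where
  "prob_vector W P \<longleftrightarrow> finite W \<and> (\<forall>w\<in>W. 0 \<le> P w) \<and> (\<Sum>w\<in>W. P w) = 1"

end

theory Submission
  imports Defs
begin

text \<open>Let w0 carry the largest mass M.  On [0,1] split off its term:
f_{1,P}(y) - 1 = (y^(1/M - 1) - 1) + B(y), with B the sum of the remaining terms.
As 0 \<le> y^(1/M - 1) \<le> 1, and by Cauchy-Schwarz for B,
(f_{1,P}(y) - 1)^2 \<le> 2 (1 - y^(1/M - 1)) + 2 |W| \<Sum>_{w \<noteq> w0} y^(2/P_w - 2).
Integrating, the first term gives 2 (1 - M) and the term of w gives
P_w / (2 - P_w) \<le> P_w, whose sum is 1 - M; hence C = 4 works.\<close>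

lemma has_integral_powr_unit_interval:
  fixes c :: real
  assumes "c > -1"
  shows "((\<lambda>y. y powr c) has_integral 1 / (c + 1)) {0..1}"
  using has_integral_powr_from_0[OF assms, of 1] by simp

text \<open>Since 0 powr 0 = 0, the function y powr 0 is discontinuous at 0.\<close>
lemma continuous_on_powr_nonneg_exponent:
  fixes c :: real
  assumes "0 \<le> c"
  shows "continuous_on {0..} (\<lambda>y. if c = 0 then 1 else y powr c)"
proof (cases "c = 0")
  case False
  with assms have "continuous_on {0..} (\<lambda>y::real. y powr c)"
    by (intro continuous_on_powr') (auto intro: continuous_intros)
  with False show ?thesis by simp
qed simp

lemma prob_vector_le_one:
  assumes "prob_vector W P" "w \<in> W"
  shows "P w \<le> 1"
  using assms member_le_sum[of w W P] by (auto simp: prob_vector_def)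

lemma prob_vector_support_sum:
  assumes "prob_vector W P"
  shows "(\<Sum>w\<in>{w\<in>W. 0 < P w}. P w) = 1"
proof -
  have "(\<Sum>w\<in>{w\<in>W. 0 < P w}. P w) = (\<Sum>w\<in>W. P w)"
    using assms by (intro sum.mono_neutral_left) (force simp: prob_vector_def)+
  with assms show ?thesis by (simp add: prob_vector_def)
qed

lemma prob_vector_Max_pos:
  assumes "prob_vector W P"
  obtains w0 where "w0 \<in> W" "P w0 = Max (P ` W)" "0 < P w0"
proof -
  have fin: "finite W" and "W \<noteq> {}"
    using assms by (auto simp: prob_vector_def)
  then have "Max (P ` W) \<in> P ` W"
    by (intro Max_in) auto
  then obtain w0 where w0: "w0 \<in> W" "P w0 = Max (P ` W)"
    by auto
  have max: "P w \<le> P w0" if "w \<in> W" for w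
    using fin that by (simp add: w0(2))
  have "0 < P w0"
  proof (rule ccontr)
    assume "\<not> 0 < P w0"
    then have "(\<Sum>w\<in>W. P w) \<le> 0"
      using max by (intro sum_nonpos) force
    with assms show False by (simp add: prob_vector_def)
  qed
  with w0 that show ?thesis by blast
qed

lemma f1_remove:
  assumes "finite W" "w0 \<in> W" "0 < P w0"
  shows "f1 W P y = y powr (1 / P w0 - 1) + (\<Sum>w\<in>{w\<in>W. 0 < P w} - {w0}. y powr (1 / P w - 1))"
  unfolding f1_def using assms by (subst sum.remove[of _ w0]) auto

lemma integrable_on_comp_f1:
  fixes h :: "real \<Rightarrow> real"
  assumes "finite W" "\<And>w. w \<in> W \<Longrightarrow> P w \<le> 1" "continuous_on UNIV h"
  shows "(\<lambda>y. h (f1 W P y)) integrable_on {0..1}"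
proof -
  define S where "S = {w\<in>W. 0 < P w}"
  define e where "e w = 1 / P w - 1" for w
  have e_nonneg: "0 \<le> e w" if "w \<in> S" for w
    using that assms(2) by (simp add: S_def e_def field_simps)
  define G where "G y = h (\<Sum>w\<in>S. if e w = 0 then 1 else y powr e w)" for y :: real
  have "continuous_on {0..} (\<lambda>y::real. \<Sum>w\<in>S. if e w = 0 then 1 else y powr e w)"
    using e_nonneg by (intro continuous_on_sum continuous_on_powr_nonneg_exponent)
  then have "continuous_on {0..1} G"
    unfolding G_def
    by (rule continuous_on_compose2[OF assms(3) continuous_on_subset]) auto
  then have G_integrable: "G integrable_on {0..1}"
    by (rule integrable_continuous_interval)
  have agree: "h (f1 W P y) = G y" if "y \<in> {0..1} - {0}" for y
    using that unfolding G_def f1_def S_def[symmetric] e_def[symmetric]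
    by (intro arg_cong[where f = h] sum.cong) auto
  show ?thesis
    by (rule integrable_spike_finite[of "{0}" _ _ G, OF _ agree G_integrable]) simp
qed

lemma square_sub_one_add_le:
  fixes x b :: real
  assumes "0 \<le> x" "x \<le> 1"
  shows "(x - 1 + b)\<^sup>2 \<le> 2 * (1 - x) + 2 * b\<^sup>2"
proof -
  have "(x - 1 + b)\<^sup>2 \<le> 2 * (x - 1)\<^sup>2 + 2 * b\<^sup>2"
    using sum_squares_ge_zero[of "x - 1 - b" 0] by (simp add: power2_eq_square algebra_simps)
  also have "(x - 1)\<^sup>2 \<le> 1 - x"
    using assms by (simp add: power2_eq_square mult_left_le algebra_simps)
  finally show ?thesis by simp
qed

lemma f1_deviation_le:
  fixes y :: real
  assumes "finite W" "\<And>w. w \<in> W \<Longrightarrow> P w \<le> 1" "w0 \<in> W" "0 < P w0" "0 \<le> y" "y \<le> 1"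
  shows "(f1 W P y - 1)\<^sup>2 \<le> 2 * (1 - y powr (1 / P w0 - 1))
           + 2 * real (card W) * (\<Sum>w\<in>{w\<in>W. 0 < P w} - {w0}. y powr (2 / P w - 2))"
proof -
  define T where "T = {w\<in>W. 0 < P w} - {w0}"
  define x0 where "x0 = y powr (1 / P w0 - 1)"
  define B where "B = (\<Sum>w\<in>T. y powr (1 / P w - 1))"
  have "0 \<le> 1 / P w0 - 1"
    using assms(2-4) by (simp add: field_simps)
  then have "0 \<le> x0" "x0 \<le> 1"
    using assms(5,6) by (auto simp: x0_def intro: powr_le1)
  moreover have "f1 W P y - 1 = x0 - 1 + B"
    using f1_remove[of W w0 P y] assms by (simp add: x0_def B_def T_def)
  ultimately have "(f1 W P y - 1)\<^sup>2 \<le> 2 * (1 - x0) + 2 * B\<^sup>2"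
    by (simp only: square_sub_one_add_le)
  also have "B\<^sup>2 \<le> (\<Sum>w\<in>T. (y powr (1 / P w - 1))\<^sup>2) * card T"
    unfolding B_def by (rule sum_squared_le_sum_of_squares)
  also have "\<dots> \<le> (\<Sum>w\<in>T. y powr (2 / P w - 2)) * card W"
  proof (rule mult_mono)
    show "(\<Sum>w\<in>T. (y powr (1 / P w - 1))\<^sup>2) \<le> (\<Sum>w\<in>T. y powr (2 / P w - 2))"
      by (rule sum_mono) (simp add: power2_eq_square flip: powr_add)
    show "real (card T) \<le> real (card W)"
      using assms(1) by (simp add: T_def) (rule card_mono; auto)
  qed (auto intro: sum_nonneg)
  finally show ?thesis
    by (simp add: x0_def T_def algebra_simps)
qed

lemma integral_f1_deviation_le:
  assumes pv: "prob_vector W P"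
  shows "integral {0..1} (\<lambda>y. (f1 W P y - 1)\<^sup>2) \<le> 4 * real (card W) * (1 - Max (P ` W))"
proof -
  have fin: "finite W"
    using pv by (simp add: prob_vector_def)
  have le1: "\<And>w. w \<in> W \<Longrightarrow> P w \<le> 1"
    using pv by (rule prob_vector_le_one)
  obtain w0 where w0: "w0 \<in> W" "P w0 = Max (P ` W)" "0 < P w0"
    using prob_vector_Max_pos[OF pv] .
  define M where "M = P w0"
  define T where "T = {w\<in>W. 0 < P w} - {w0}"
  have T: "0 < P w" "P w \<le> 1" if "w \<in> T" for w
    using that le1 by (auto simp: T_def)
  have sum_T: "(\<Sum>w\<in>T. P w) = 1 - M"
    using prob_vector_support_sum[OF pv] sum.remove[of "{w\<in>W. 0 < P w}" w0 P] fin w0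
    by (simp add: T_def M_def)
  define g where "g y = 2 * (1 - y powr (1 / M - 1))
                        + 2 * real (card W) * (\<Sum>w\<in>T. y powr (2 / P w - 2))" for y :: real
  have g_integral: "(g has_integral 2 * (1 - M) + 2 * real (card W) * (\<Sum>w\<in>T. P w / (2 - P w))) {0..1}"
    unfolding g_def
  proof (intro has_integral_add has_integral_mult_right has_integral_diff has_integral_sum)
    show "((\<lambda>y. 1) has_integral 1) {0..1::real}"
      using has_integral_const_real[of 1 0 1] by simp
    show "((\<lambda>y. y powr (1 / M - 1)) has_integral M) {0..1}"
      using has_integral_powr_unit_interval[of "1 / M - 1"] w0 by (simp add: M_def)
    fix w assume "w \<in> T"
    then show "((\<lambda>y. y powr (2 / P w - 2)) has_integral P w / (2 - P w)) {0..1}"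
      using has_integral_powr_unit_interval[of "2 / P w - 2"] T[of w]
      by (simp add: field_simps)
  qed (simp add: fin T_def)
  have "(\<lambda>y. (f1 W P y - 1)\<^sup>2) integrable_on {0..1}"
  proof (rule integrable_on_comp_f1[OF fin])
    show "continuous_on UNIV (\<lambda>z::real. (z - 1)\<^sup>2)"
      by (intro continuous_intros)
  qed (rule le1)
  then have "integral {0..1} (\<lambda>y. (f1 W P y - 1)\<^sup>2)
               \<le> 2 * (1 - M) + 2 * real (card W) * (\<Sum>w\<in>T. P w / (2 - P w))"
    using g_integral f1_deviation_le[of W P w0, OF fin le1 w0(1,3)]
    by (intro has_integral_le[OF integrable_integral]) (auto simp: g_def M_def T_def)
  also have "\<dots> \<le> 2 * (1 - M) + 2 * real (card W) * (1 - M)"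
  proof -
    have "(\<Sum>w\<in>T. P w / (2 - P w)) \<le> (\<Sum>w\<in>T. P w)"
      using T by (intro sum_mono) (simp add: divide_le_eq)
    then show ?thesis
      unfolding sum_T by (intro add_left_mono mult_left_mono) auto
  qed
  also have "\<dots> \<le> 4 * real (card W) * (1 - M)"
  proof -
    have "1 \<le> real (card W)"
      using fin w0(1) by (auto simp: Suc_le_eq card_gt_0_iff)
    then have "1 * (1 - M) \<le> real (card W) * (1 - M)"
      using le1[OF w0(1)] by (intro mult_right_mono) (auto simp: M_def)
    then show ?thesis
      by (simp add: algebra_simps)
  qed
  finally show ?thesis
    by (simp add: M_def w0(2))
qed

theorem lemmaA4:
  shows "\<exists>C>0. \<forall>(W :: nat set) (P :: nat \<Rightarrow> real).
           prob_vector W P \<longrightarrow>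
           integral {0..1} (\<lambda>y. (f1 W P y - 1)\<^sup>2) \<le> C * real (card W) * (1 - Max (P ` W))"
  using integral_f1_deviation_le by (intro exI[of _ 4]) auto

end
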